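(* For all bunches $\Delta$ and formulas $\varphi,\psi$: if $\Delta\vdash_{\mathsf{cf}}\varphi-\!\!\ast\,\psi$ then $\Delta\mathbin{,}\varphi\vdash_{\mathsf{cf}}\psi$; and if $\Delta\vdash_{\mathsf{cf}}\varphi\to\psi$ then $\Delta\mathbin{;}\varphi\vdash_{\mathsf{cf}}\psi$.
   Context: Formulas of BI: $\varphi,\psi ::= \top \mid \bot \mid \varphi\wedge\psi \mid \varphi\vee\psi \mid \varphi\to\psi \mid \mathsf{emp} \mid \varphi\ast\psi \mid \varphi -\!\!\ast\, \psi \mid a$, $a\in\mathrm{Atom}$. Bunches are finite binary trees whose leaves are formulas or empty bunches $\varnothing_m,\varnothing_a$ and whose internal nodes are labelled by the multiplicative comma ($\Delta_1\mathbin{,}\Delta_2$) or the additive semicolon ($\Delta_1\mathbin{;}\Delta_2$). A bunched context $\Delta(-)$ is a bunch with one leaf replaced by a hole; $\Delta(\Gamma)$ fills it with $\Gamma$. Bunch equivalence $\equiv$ is the least equivalence relation making $\mathbin{,}$ commutative, associative with unit $\varnothing_m$, $\mathbin{;}$ commutative, associative with unit $\varnothing_a$, and closed under contexts. The cut-free BI sequent calculus ($\Delta\vdash_{\mathsf{cf}}\varphi$) has the rules: (ax) $a\vdash a$ for atoms $a$; (equiv) from $\Delta'\vdash\varphi$, $\Delta\equiv\Delta'$ infer $\Delta\vdash\varphi$; (W;) from $\Delta(\Delta_1)\vdash\varphi$ infer $\Delta(\Delta_1\mathbin{;}\Delta_2)\vdash\varphi$; (C;) from $\Delta(\Delta_1\mathbin{;}\Delta_1)\vdash\varphi$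 infer $\Delta(\Delta_1)\vdash\varphi$; (empR) $\varnothing_m\vdash\mathsf{emp}$; (empL) from $\Delta(\varnothing_m)\vdash\varphi$ infer $\Delta(\mathsf{emp})\vdash\varphi$; ($\ast$R) from $\Delta_1\vdash\varphi$, $\Delta_2\vdash\psi$ infer $\Delta_1\mathbin{,}\Delta_2\vdash\varphi\ast\psi$; ($\ast$L) from $\Delta(\varphi\mathbin{,}\psi)\vdash\chi$ infer $\Delta(\varphi\ast\psi)\vdash\chi$; ($-\!\ast$R) from $\Delta\mathbin{,}\varphi\vdash\psi$ infer $\Delta\vdash\varphi-\!\!\ast\,\psi$; ($-\!\ast$L) from $\Delta_1\vdash\varphi$, $\Delta(\Delta_2\mathbin{,}\psi)\vdash\chi$ infer $\Delta((\Delta_1\mathbin{,}\Delta_2)\mathbin{,}(\varphi-\!\!\ast\,\psi))\vdash\chi$; ($\top$R) $\varnothing_a\vdash\top$; ($\top$L) from $\Delta(\varnothing_a)\vdash\varphi$ infer $\Delta(\top)\vdash\varphi$; ($\wedge$R) from $\Delta_1\vdash\varphi$, $\Delta_2\vdash\psi$ infer $\Delta_1\mathbin{;}\Delta_2\vdash\varphi\wedge\psi$; ($\wedge$L) from $\Delta(\varphi\mathbin{;}\psi)\vdash\chi$ infer $\Delta(\varphi\wedge\psi)\vdash\chi$; ($\to$R) from $\Delta\mathbin{;}\varphi\vdash\psi$ infer $\Delta\vdash\varphi\to\psi$; ($\to$L) from $\Delta_1\vdash\varphi$, $\Delta(\Delta_2\mathbin{;}\psi)\vdash\chi$ infer $\Delta((\Delta_1\mathbin{;}\Delta_2)\mathbin{;}(\varphi\to\psi))\vdash\chi$;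 ($\bot$L) $\Delta(\bot)\vdash\varphi$; ($\vee$R1/2) from $\Delta\vdash\varphi$ (resp. $\Delta\vdash\psi$) infer $\Delta\vdash\varphi\vee\psi$; ($\vee$L) from $\Delta(\varphi)\vdash\chi$, $\Delta(\psi)\vdash\chi$ infer $\Delta(\varphi\vee\psi)\vdash\chi$. (No cut rule.) A formula used as a bunch denotes the single-leaf bunch. *)

theory Defs
  imports Main
begin

datatype 'a form =
    FTop | FBot | FAnd "'a form" "'a form" | FOr "'a form" "'a form"
  | FImp "'a form" "'a form" | FEmp | FStar "'a form" "'a form"
  | FWand "'a form" "'a form" | FAtom 'a

datatype 'a bunch =
    BForm "'a form" | EmpM | EmpA
  | Comma "'a bunch" "'a bunch" | Semi "'a bunch" "'a bunch"

datatype 'a bctx =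
    Hole
  | CommaL "'a bctx" "'a bunch" | CommaR "'a bunch" "'a bctx"
  | SemiL "'a bctx" "'a bunch" | SemiR "'a bunch" "'a bctx"

primrec fill :: "'a bctx \<Rightarrow> 'a bunch \<Rightarrow> 'a bunch" where
  "fill Hole G = G"
| "fill (CommaL C D) G = Comma (fill C G) D"
| "fill (CommaR D C) G = Comma D (fill C G)"
| "fill (SemiL C D) G = Semi (fill C G) D"
| "fill (SemiR D C) G = Semi D (fill C G)"

inductive beq :: "'a bunch \<Rightarrow> 'a bunch \<Rightarrow> bool" where
  refl: "beq D D"
| sym: "beq D E \<Longrightarrow> beq E D"
| trans: "beq D E \<Longrightarrow> beq E F \<Longrightarrow> beq D F"
| comma_comm: "beq (Comma D E) (Comma E D)"
| comma_assoc: "beq (Comma D (Comma E F)) (Comma (Comma D E) F)"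
| comma_unit: "beq (Comma D EmpM) D"
| semi_comm: "beq (Semi D E) (Semi E D)"
| semi_assoc: "beq (Semi D (Semi E F)) (Semi (Semi D E) F)"
| semi_unit: "beq (Semi D EmpA) D"
| ctx: "beq D E \<Longrightarrow> beq (fill C D) (fill C E)"

inductive cf :: "'a bunch \<Rightarrow> 'a form \<Rightarrow> bool" where
  ax: "cf (BForm (FAtom a)) (FAtom a)"
| equiv: "cf D' phi \<Longrightarrow> beq D D' \<Longrightarrow> cf D phi"
| weakS: "cf (fill C D1) phi \<Longrightarrow> cf (fill C (Semi D1 D2)) phi"
| contrS: "cf (fill C (Semi D1 D1)) phi \<Longrightarrow> cf (fill C D1) phi"
| empR: "cf EmpM FEmp"
| empL: "cf (fill C EmpM) phi \<Longrightarrow> cf (fill C (BForm FEmp)) phi"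
| starR: "cf D1 phi \<Longrightarrow> cf D2 psi \<Longrightarrow> cf (Comma D1 D2) (FStar phi psi)"
| starL: "cf (fill C (Comma (BForm phi) (BForm psi))) chi \<Longrightarrow> cf (fill C (BForm (FStar phi psi))) chi"
| wandR: "cf (Comma D (BForm phi)) psi \<Longrightarrow> cf D (FWand phi psi)"
| wandL: "cf D1 phi \<Longrightarrow> cf (fill C (Comma D2 (BForm psi))) chi \<Longrightarrow>
          cf (fill C (Comma (Comma D1 D2) (BForm (FWand phi psi)))) chi"
| topR: "cf EmpA FTop"
| topL: "cf (fill C EmpA) phi \<Longrightarrow> cf (fill C (BForm FTop)) phi"
| andR: "cf D1 phi \<Longrightarrow> cf D2 psi \<Longrightarrow> cf (Semi D1 D2) (FAnd phi psi)"
| andL: "cf (fill C (Semi (BForm phi) (BForm psi))) chi \<Longrightarrow> cf (fill C (BForm (FAnd phi psi))) chi"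
| impR: "cf (Semi D (BForm phi)) psi \<Longrightarrow> cf D (FImp phi psi)"
| impL: "cf D1 phi \<Longrightarrow> cf (fill C (Semi D2 (BForm psi))) chi \<Longrightarrow>
          cf (fill C (Semi (Semi D1 D2) (BForm (FImp phi psi)))) chi"
| botL: "cf (fill C (BForm FBot)) phi"
| orR1: "cf D phi \<Longrightarrow> cf D (FOr phi psi)"
| orR2: "cf D psi \<Longrightarrow> cf D (FOr phi psi)"
| orL: "cf (fill C (BForm phi)) chi \<Longrightarrow> cf (fill C (BForm psi)) chi \<Longrightarrow> cf (fill C (BForm (FOr phi psi))) chi"

end

theory Submission
  imports Defs
begin

primrec ctx_comp :: "'a bctx \<Rightarrow> 'a bctx \<Rightarrow> 'a bctx" where
  "ctx_comp Hole C' = C'"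
| "ctx_comp (CommaL C D) C' = CommaL (ctx_comp C C') D"
| "ctx_comp (CommaR D C) C' = CommaR D (ctx_comp C C')"
| "ctx_comp (SemiL C D) C' = SemiL (ctx_comp C C') D"
| "ctx_comp (SemiR D C) C' = SemiR D (ctx_comp C C')"

lemma fill_ctx_comp: "fill (ctx_comp C C') G = fill C (fill C' G)"
  by (induction C) auto

lemma cf_wand_imp_inversion:
  assumes "cf D chi"
    and "chi = FWand phi psi \<and> E = CommaL Hole (BForm phi)
       \<or> chi = FImp phi psi \<and> E = SemiL Hole (BForm phi)"
  shows "cf (fill E D) psi"
  using assms
proof (induction rule: cf.induct)
  (* A left or structural inference in context C is the same inference in context ctx_comp E C;
     among the right rules only wandR and impR conclude a wand or an implication, and their
     premises are exactly the goal. *)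
  case (equiv D' chi D)
  then show ?case by (metis beq.ctx cf.equiv)
qed (auto simp flip: fill_ctx_comp intro: cf.intros)

theorem lemma3p2:
  fixes D :: "'a bunch" and phi psi :: "'a form"
  shows "(cf D (FWand phi psi) \<longrightarrow> cf (Comma D (BForm phi)) psi)
       \<and> (cf D (FImp phi psi) \<longrightarrow> cf (Semi D (BForm phi)) psi)"
  using cf_wand_imp_inversion by fastforce

end
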